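(* Let $k \geq 3$ be an integer and let $n$ be a $k$-admissible integer such that $2k+1 < n \leq 3k$. Any partial $k$-star design of order $n$ with three stars is completable.
   Context: A $k$-star is a copy of $K_{1,k}$. A partial $k$-star design of order $n$ is a pair $(V,\mathcal{A})$ where $V$ is a set of $n$ vertices and $\mathcal{A}$ is a set of edge-disjoint $k$-stars that are subgraphs of the complete graph $K_V$; it is completable if there is a set $\mathcal{B}\supseteq\mathcal{A}$ of edge-disjoint $k$-stars in $K_V$ covering all edges of $K_V$. A positive integer $n$ is $k$-admissible if $\binom{n}{2}\equiv 0 \pmod{k}$. *)

theory Defs
  imports Main
begin

definition complete_edges :: "'a set \<Rightarrow> 'a set set" where
  "complete_edges V = {{x, y} | x y. x \<in> V \<and> y \<in> V \<and> x \<noteq> y}"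

definition is_kstar :: "nat \<Rightarrow> 'a set \<Rightarrow> 'a set set \<Rightarrow> bool" where
  "is_kstar k V S \<longleftrightarrow> (\<exists>c L. c \<in> V \<and> L \<subseteq> V - {c} \<and> card L = k \<and> finite L
      \<and> S = (\<lambda>x. {c, x}) ` L)"

definition partial_kstar_design :: "nat \<Rightarrow> 'a set \<Rightarrow> 'a set set set \<Rightarrow> bool" where
  "partial_kstar_design k V A \<longleftrightarrow> (\<forall>S\<in>A. is_kstar k V S) \<and> pairwise disjnt A"

definition completable :: "nat \<Rightarrow> 'a set \<Rightarrow> 'a set set set \<Rightarrow> bool" where
  "completable k V A \<longleftrightarrow> (\<exists>B. A \<subseteq> B \<and> partial_kstar_design k V B
      \<and> \<Union>B = complete_edges V)"

definition admissible :: "nat \<Rightarrow> nat \<Rightarrow> bool" where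
  "admissible k n \<longleftrightarrow> (n choose 2) mod k = 0"

end

theory Submission
  imports Defs "HOL-Library.Disjoint_Sets"
begin

text \<open>
  Let \<open>N = (n choose 2) / k\<close> be the number of stars in a decomposition of \<open>K\<^sub>n\<close>. As
  \<open>2k + 1 < n \<le> 3k\<close> gives \<open>n + 3 \<le> N \<le> 2n - k\<close>, we look for a completion in which every
  vertex is the centre of one or two stars; the \<open>N - n\<close> doubly used vertices form a set \<open>D\<close>
  that contains the three given centres and avoids the vertices that are leaves of all three
  given stars. A vertex \<open>v\<close> then needs \<open>k\<close> times its number of new stars among the free
  edges. By Hakimi's theorem the free edges can be oriented with these in-degrees as soon as no vertex
  set \<open>S\<close> spans more free edges than its total demand, and the edges pointing to \<open>v\<close> then
  split into \<open>k\<close>-stars centred at \<open>v\<close>. For \<open>|S| \<le> 2k\<close> the condition holds because at most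
  one vertex gets no new star; for larger \<open>S\<close> we count the free edges meeting the complement
  \<open>T\<close>, which has at most \<open>n - 2k - 1\<close> vertices, bounding the edges of the given stars that
  enter \<open>T\<close> from outside.
\<close>

section \<open>Arithmetic of the parameters\<close>

lemma double_choose_two: "2 * (m choose 2) = m * (m - 1)"
  by (metis Suc_1 binomial_absorption choose_one)

lemma choose_two_add: "(m + t) choose 2 = (m choose 2) + m * t + (t choose 2)"
  by (induction t) (simp_all add: numeral_2_eq_2)

lemma admissible_above_double_cases:
  assumes "3 \<le> k" "admissible k n" "2*k + 1 < n"
  shows "2*k + 4 \<le> n \<or> (k = 3 \<and> n = 9)"
proof -
  have k_dvd: "k dvd n choose 2" using assms(2) unfolding admissible_def by auto
  consider "n = 2*k + 2" | "n = 2*k + 3" | "2*k + 4 \<le> n" using assms(3) by linarith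
  then show ?thesis
  proof cases
    case 1
    then have "2 * (n choose 2) = 2 * (k * (2*k + 3) + 1)"
      using double_choose_two[of n] by (simp add: algebra_simps)
    then have "n choose 2 = k * (2*k + 3) + 1" by (simp only: mult_cancel_left) simp
    then have "k dvd 1" using k_dvd by (simp only: dvd_add_right_iff[OF dvd_triv_left])
    then show ?thesis using assms(1) by simp
  next
    case 2
    then have "2 * (n choose 2) = 2 * (k * (2*k + 5) + 3)"
      using double_choose_two[of n] by (simp add: algebra_simps)
    then have "n choose 2 = k * (2*k + 5) + 3" by (simp only: mult_cancel_left) simp
    then have "k dvd 3" using k_dvd by (simp only: dvd_add_right_iff[OF dvd_triv_left])
    then have "k = 3" using assms(1) dvd_imp_le[of k 3] by simp
    then show ?thesis using 2 by simp
  qed simp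
qed

lemma num_stars_bounds:
  assumes "3 \<le> k" "k * N = n choose 2" "2*k + 3 \<le> n" "n \<le> 3*k"
  shows "n + 3 \<le> N" "N + k \<le> 2*n"
proof -
  have twice: "2*k*N = n*(n - 1)" using assms(2) double_choose_two[of n] by simp
  have "n*(2*k + 2) \<le> n*(n - 1)" using assms(3) by (intro mult_le_mono2) simp
  then have "2*k*(n + 2) < 2*k*N" using assms(3) twice by (simp add: algebra_simps)
  then have "n + 2 < N" using mult_less_cancel1 by blast
  then show "n + 3 \<le> N" by simp
  define p where "p = n - 2*k"
  have p: "n = 2*k + p" "p \<le> k" using assms(3,4) unfolding p_def by simp_all
  have "n*(n - 1) \<le> 2*k*(3*k + 2*p)"
  proof -
    have "p*p \<le> k*k" using p(2) by (simp add: mult_le_mono)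
    then show ?thesis unfolding p(1) by (simp add: algebra_simps right_diff_distrib)
  qed
  then have "2*k*N \<le> 2*k*(3*k + 2*p)" using twice by simp
  then have "N \<le> 3*k + 2*p" using assms(1) by simp
  then show "N + k \<le> 2*n" using p(1) by simp
qed

lemma star_cut_inequality:
  fixes k n a b L :: nat
  assumes "k \<ge> 3" "2*k+4 \<le> n" "a + b + 2*k + 1 \<le> n" "L \<le> 2*a + 3*b"
  shows "k*(2*a+b) + L + ((n-(a+b)) choose 2) \<le> n choose 2"
proof -
  define t where "t = a + b"
  define s where "s = n - t - (2*k+1)"
  have m: "n - t = 2*k + 1 + s" and "3 \<le> s + t"
    using assms(2,3) unfolding s_def t_def by linarith+
  have "2*(k*(2*a+b) + L) \<le> 4*(k*a) + 2*(k*b) + 4*a + 6*b"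
    using assms(4) by (simp add: algebra_simps)
  also have "\<dots> \<le> 2*((2*k+1)*t) + 2*t"
    using assms(1) by (simp add: t_def algebra_simps)
  also have "\<dots> \<le> 2*((2*k+1)*t) + t*(2*s + t - 1)"
    using \<open>3 \<le> s + t\<close> mult_le_mono2[of 2 "2*s + t - 1" t] by (cases "t = 0") auto
  also have "t*(2*s + t - 1) = 2*(s*t) + 2*(t choose 2)"
    unfolding double_choose_two by (cases t) (simp_all add: algebra_simps)
  also have "2*((2*k+1)*t) + (2*(s*t) + 2*(t choose 2)) = 2*((n-t)*t + (t choose 2))"
    unfolding m by (simp add: algebra_simps)
  finally have "k*(2*a+b) + L \<le> (n-t)*t + (t choose 2)" by simp
  moreover have "n choose 2 = ((n-t) choose 2) + (n-t)*t + (t choose 2)"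
    using choose_two_add[of "n-t" t] assms(3) unfolding t_def by simp
  ultimately show ?thesis unfolding t_def by linarith
qed

lemma star_cut_inequality_nine:
  fixes a b L :: nat
  assumes "a + b \<le> 2" "L \<le> 2*a + 3*b" "L \<le> (a + b) * (3 - a)"
  shows "3*(2*a+b) + L + ((9 - (a+b)) choose 2) \<le> 9 choose 2"
proof -
  have "a \<in> {0, 1, 2}" "b \<in> {0, 1, 2}" using assms(1) by auto
  then show ?thesis using assms by (auto simp: choose_two)
qed

lemma sum_card_fibres:
  assumes "finite S" "finite T" "g ` S \<subseteq> T"
  shows "(\<Sum>y\<in>T. card {x\<in>S. g x = y}) = card S"
  using sum.group[OF assms, of "\<lambda>_. 1::nat"] by simp

lemma sum_card_swap:
  assumes "finite I" "finite J"
  shows "(\<Sum>i\<in>I. card {j\<in>J. P i j}) = (\<Sum>j\<in>J. card {i\<in>I. P i j})"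
proof -
  have "(\<Sum>i\<in>I. card {j\<in>J. P i j}) = (\<Sum>i\<in>I. \<Sum>j\<in>J. of_bool (P i j))"
    using assms by (simp add: Collect_conj_eq Int_commute)
  also have "\<dots> = (\<Sum>j\<in>J. \<Sum>i\<in>I. of_bool (P i j))" by (rule sum.swap)
  also have "\<dots> = (\<Sum>j\<in>J. card {i\<in>I. P i j})"
    using assms by (simp add: Collect_conj_eq Int_commute)
  finally show ?thesis .
qed

lemma complete_edges_card_2: "complete_edges V = {e. e \<subseteq> V \<and> card e = 2}"
  unfolding complete_edges_def by (auto simp: card_2_iff)

lemma finite_complete_edges: "finite V \<Longrightarrow> finite (complete_edges V)"
  unfolding complete_edges_card_2 by simp

lemma card_complete_edges: "finite V \<Longrightarrow> card (complete_edges V) = card V choose 2"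
  unfolding complete_edges_card_2 by (simp add: n_subsets)

lemma card_complete_edges_meeting:
  assumes "finite V" "T \<subseteq> V"
  shows "card {e\<in>complete_edges V. e \<inter> T \<noteq> {}} + ((card V - card T) choose 2) = card V choose 2"
proof -
  have "complete_edges V = {e\<in>complete_edges V. e \<inter> T \<noteq> {}} \<union> complete_edges (V - T)"
    "{e\<in>complete_edges V. e \<inter> T \<noteq> {}} \<inter> complete_edges (V - T) = {}"
    unfolding complete_edges_card_2 by blast+
  moreover have "card (V - T) = card V - card T"
    using assms by (simp add: card_Diff_subset finite_subset)
  ultimately show ?thesis
    using assms(1) card_Un_disjoint[of "{e\<in>complete_edges V. e \<inter> T \<noteq> {}}" "complete_edges (V - T)"]
    by (simp add: card_complete_edges finite_complete_edges)
qed

section \<open>Hakimi's orientation theorem\<close>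

definition orients_with_indegree :: "'a set \<Rightarrow> 'a set set \<Rightarrow> ('a \<Rightarrow> nat) \<Rightarrow> ('a set \<Rightarrow> 'a) \<Rightarrow> bool" where
  "orients_with_indegree V E d h \<longleftrightarrow>
     (\<forall>e\<in>E. h e \<in> e) \<and> (\<forall>w\<in>V. card {e\<in>E. h e = w} = d w)"

lemma orients_with_indegree_insert:
  assumes "orients_with_indegree V F (d(u := d u - 1)) h" "0 < d u"
    and "finite F" "e \<notin> F" "u \<in> e"
  shows "orients_with_indegree V (insert e F) d (h(e := u))"
  unfolding orients_with_indegree_def
proof (intro conjI ballI)
  fix x assume "x \<in> insert e F"
  then show "(h(e := u)) x \<in> x"
    using assms(1,4,5) unfolding orients_with_indegree_def by auto
next
  fix w assume "w \<in> V"
  have F_part: "{x\<in>insert e F. (h(e := u)) x = w} - {e} = {x\<in>F. h x = w}"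
    using assms(4) by auto
  show "card {x\<in>insert e F. (h(e := u)) x = w} = d w"
  proof (cases "w = u")
    case True
    then have "{x\<in>insert e F. (h(e := u)) x = w} = insert e {x\<in>F. h x = w}"
      using F_part by auto
    then show ?thesis
      using assms \<open>w \<in> V\<close> True unfolding orients_with_indegree_def by simp
  next
    case False
    then have "{x\<in>insert e F. (h(e := u)) x = w} = {x\<in>F. h x = w}"
      using F_part by auto
    then show ?thesis
      using assms(1) \<open>w \<in> V\<close> False unfolding orients_with_indegree_def by simp
  qed
qed

lemma crossing_edge_breaks_tight_sets:
  fixes d :: "'a \<Rightarrow> nat"
  assumes "finite V" "finite E" and feasible: "\<forall>S\<subseteq>V. card {e\<in>E. e \<subseteq> S} \<le> sum d S"
    and "S1 \<subseteq> V" "S2 \<subseteq> V" "e \<in> E" "e \<subseteq> S1 \<union> S2" "\<not> e \<subseteq> S1" "\<not> e \<subseteq> S2"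
  shows "card {e\<in>E. e \<subseteq> S1} < sum d S1 \<or> card {e\<in>E. e \<subseteq> S2} < sum d S2"
proof -
  \<comment> \<open>the number of edges spanned is supermodular, strictly so across the edge \<open>e\<close>\<close>
  define X where "X S = {x\<in>E. x \<subseteq> S}" for S
  have fin: "finite (X S)" for S using assms(2) unfolding X_def by simp
  have X_le: "card (X S) \<le> sum d S" if "S \<subseteq> V" for S
    using feasible that unfolding X_def by blast
  have inter: "X S1 \<inter> X S2 = X (S1 \<inter> S2)" unfolding X_def by auto
  have sub: "insert e (X S1 \<union> X S2) \<subseteq> X (S1 \<union> S2)" and "e \<notin> X S1 \<union> X S2"
    using assms(6-9) unfolding X_def by auto
  then have "card (X S1 \<union> X S2) < card (X (S1 \<union> S2))"
    using fin card_mono[OF fin sub] by simp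
  then have "card (X S1) + card (X S2) < card (X (S1 \<union> S2)) + card (X (S1 \<inter> S2))"
    using card_Un_Int[OF fin fin, of S1 S2] unfolding inter by linarith
  also have "\<dots> \<le> sum d (S1 \<union> S2) + sum d (S1 \<inter> S2)"
    using assms(4,5) by (intro add_mono X_le) auto
  also have "\<dots> = sum d S1 + sum d S2"
    using assms(1,4,5) by (intro sum.union_inter) (auto intro: finite_subset)
  finally show ?thesis unfolding X_def by linarith
qed

lemma unseparated_endpoint:
  fixes d :: "'a \<Rightarrow> nat"
  assumes "finite V" "finite E" and feasible: "\<forall>S\<subseteq>V. card {e\<in>E. e \<subseteq> S} \<le> sum d S"
    and "{u, v} \<in> E"
  obtains "\<forall>S\<subseteq>V. u \<in> S \<longrightarrow> v \<notin> S \<longrightarrow> card {e\<in>E. e \<subseteq> S} < sum d S"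
    | "\<forall>S\<subseteq>V. v \<in> S \<longrightarrow> u \<notin> S \<longrightarrow> card {e\<in>E. e \<subseteq> S} < sum d S"
proof (cases "\<forall>S\<subseteq>V. u \<in> S \<longrightarrow> v \<notin> S \<longrightarrow> card {e\<in>E. e \<subseteq> S} < sum d S")
  case True
  then show ?thesis by (rule that(1))
next
  case False
  then obtain S1 where S1: "S1 \<subseteq> V" "u \<in> S1" "v \<notin> S1" "\<not> card {e\<in>E. e \<subseteq> S1} < sum d S1"
    by blast
  have "card {e\<in>E. e \<subseteq> S2} < sum d S2" if "S2 \<subseteq> V" "v \<in> S2" "u \<notin> S2" for S2
  proof -
    have "{u, v} \<subseteq> S1 \<union> S2" "\<not> {u, v} \<subseteq> S1" "\<not> {u, v} \<subseteq> S2" using S1 that by auto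
    then show ?thesis
      using crossing_edge_breaks_tight_sets[OF assms(1,2) feasible S1(1) that(1) assms(4)] S1(4) by blast
  qed
  then show ?thesis using that(2) by blast
qed

lemma sum_decrement:
  fixes d :: "'a \<Rightarrow> nat"
  assumes "finite S" "0 < d u"
  shows "sum (d(u := d u - 1)) S + (if u \<in> S then 1 else 0) = sum d S"
proof (cases "u \<in> S")
  case True
  have "sum (d(u := d u - 1)) (S - {u}) = sum d (S - {u})" by (rule sum.cong) auto
  then show ?thesis using True assms by (simp add: sum.remove)
next
  case False
  then have "sum (d(u := d u - 1)) S = sum d S" by (intro sum.cong) auto
  then show ?thesis using False by simp
qed

lemma indegree_condition_remove_edge:
  fixes d :: "'a \<Rightarrow> nat"
  assumes "finite V" "finite F" "u \<in> V" "{u, v} \<notin> F" "insert {u, v} F \<subseteq> complete_edges V"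
    and sum: "sum d V = Suc (card F)"
    and feasible: "\<forall>S\<subseteq>V. card {e\<in>insert {u, v} F. e \<subseteq> S} \<le> sum d S"
    and slack: "\<forall>S\<subseteq>V. u \<in> S \<longrightarrow> v \<notin> S \<longrightarrow> card {e\<in>insert {u, v} F. e \<subseteq> S} < sum d S"
  shows "0 < d u" and "sum (d(u := d u - 1)) V = card F"
    and "\<forall>S\<subseteq>V. card {e\<in>F. e \<subseteq> S} \<le> sum (d(u := d u - 1)) S"
proof -
  have no_loops: "\<not> e \<subseteq> {w}" if "e \<in> insert {u, v} F" for e w
    using that assms(5) unfolding complete_edges_def by auto
  then have "u \<noteq> v" by blast
  then show pos: "0 < d u"
    using slack assms(3) no_loops by (auto dest: spec[of _ "{u}"])
  show "sum (d(u := d u - 1)) V = card F"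
    using sum_decrement[of V d u, OF assms(1) pos] assms(3) sum by simp
  show "\<forall>S\<subseteq>V. card {e\<in>F. e \<subseteq> S} \<le> sum (d(u := d u - 1)) S"
  proof (intro allI impI)
    fix S assume "S \<subseteq> V"
    have "card {e\<in>F. e \<subseteq> S} + (if u \<in> S then 1 else 0) \<le> card {e\<in>insert {u, v} F. e \<subseteq> S} + (if u \<in> S \<and> v \<notin> S then 1 else 0)"
    proof (cases "u \<in> S \<and> v \<in> S")
      case True
      then have "{e\<in>insert {u, v} F. e \<subseteq> S} = insert {u, v} {e\<in>F. e \<subseteq> S}" by auto
      then show ?thesis using assms(2,4) True by simp
    next
      case False
      have "card {e\<in>F. e \<subseteq> S} \<le> card {e\<in>insert {u, v} F. e \<subseteq> S}"
        using assms(2) by (intro card_mono) auto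
      then show ?thesis using False by auto
    qed
    also have "\<dots> \<le> sum d S"
      using feasible slack \<open>S \<subseteq> V\<close> by (auto simp: Suc_le_eq)
    finally show "card {e\<in>F. e \<subseteq> S} \<le> sum (d(u := d u - 1)) S"
      using sum_decrement[of S d u, OF finite_subset[OF \<open>S \<subseteq> V\<close> assms(1)] pos] by linarith
  qed
qed

theorem hakimi_orientation:
  fixes d :: "'a \<Rightarrow> nat"
  assumes "finite V" "E \<subseteq> complete_edges V" "sum d V = card E"
    and "\<forall>S\<subseteq>V. card {e\<in>E. e \<subseteq> S} \<le> sum d S"
  shows "\<exists>h. orients_with_indegree V E d h"
proof -
  have "finite E" using assms(1,2) finite_complete_edges finite_subset by blast
  then show ?thesis using assms(2-4)
  proof (induction E arbitrary: d rule: finite_induct)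
    case empty
    then have "\<forall>w\<in>V. d w = 0" using assms(1) by simp
    then show ?case unfolding orients_with_indegree_def by simp
  next
    case (insert e F)
    \<comment> \<open>no tight set contains \<open>u\<close> but not \<open>v\<close>: orient \<open>e\<close> towards \<open>u\<close> and lower the demand at \<open>u\<close>\<close>
    have orient_towards: "\<exists>h. orients_with_indegree V (insert e F) d h"
      if e: "e = {u, v}" "u \<in> V"
        and slack: "\<forall>S\<subseteq>V. u \<in> S \<longrightarrow> v \<notin> S \<longrightarrow> card {x\<in>insert e F. x \<subseteq> S} < sum d S"
      for u v
    proof -
      have "{u, v} \<notin> F" "insert {u, v} F \<subseteq> complete_edges V" "sum d V = Suc (card F)"
        "\<forall>S\<subseteq>V. card {x\<in>insert {u, v} F. x \<subseteq> S} \<le> sum d S"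
        "\<forall>S\<subseteq>V. u \<in> S \<longrightarrow> v \<notin> S \<longrightarrow> card {x\<in>insert {u, v} F. x \<subseteq> S} < sum d S"
        using insert.hyps insert.prems slack unfolding e(1) by simp_all
      note reduced = indegree_condition_remove_edge[OF assms(1) insert.hyps(1) \<open>u \<in> V\<close> this]
      have "F \<subseteq> complete_edges V" using insert.prems(1) by blast
      then obtain h where "orients_with_indegree V F (d(u := d u - 1)) h"
        using insert.IH reduced(2,3) by blast
      then have "orients_with_indegree V (insert e F) d (h(e := u))"
        using reduced(1) insert.hyps e by (intro orients_with_indegree_insert) auto
      then show ?thesis by blast
    qed
    obtain u v where e: "e = {u, v}" "u \<in> V" "v \<in> V"
      using insert.prems(1) unfolding complete_edges_def by blast
    have "finite (insert e F)" using insert.hyps(1) by simp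
    then show ?case
    proof (rule unseparated_endpoint[OF assms(1) _ insert.prems(3)])
      show "{u, v} \<in> insert e F" using e(1) by simp
    next
      assume "\<forall>S\<subseteq>V. u \<in> S \<longrightarrow> v \<notin> S \<longrightarrow> card {x\<in>insert e F. x \<subseteq> S} < sum d S"
      then show ?thesis by (rule orient_towards[OF e(1,2)])
    next
      assume "\<forall>S\<subseteq>V. v \<in> S \<longrightarrow> u \<notin> S \<longrightarrow> card {x\<in>insert e F. x \<subseteq> S} < sum d S"
      then show ?thesis using orient_towards[of v u] e by (simp add: insert_commute)
    qed
  qed
qed

section \<open>Splitting an orientation into stars\<close>

lemma partition_into_blocks:
  assumes "finite Q" "card Q = k * j"
  shows "\<exists>P. \<Union>P = Q \<and> disjoint P \<and> (\<forall>B\<in>P. card B = k)"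
  using assms
proof (induction j arbitrary: Q)
  case 0
  then show ?case by (intro exI[of _ "{}"]) auto
next
  case (Suc j)
  obtain B where B: "B \<subseteq> Q" "card B = k"
    using obtain_subset_with_card_n[of k Q] Suc.prems by auto
  have "card (Q - B) = k * j"
    using Suc.prems B by (simp add: card_Diff_subset finite_subset)
  then obtain P where P: "\<Union>P = Q - B" "disjoint P" "\<forall>B\<in>P. card B = k"
    using Suc.IH[of "Q - B"] Suc.prems by auto
  have "\<Union>(insert B P) = Q" using P(1) B(1) by blast
  moreover have "disjoint (insert B P)"
    using P(1,2) unfolding pairwise_insert disjnt_def by blast
  ultimately show ?case using B(2) P(3) by blast
qed

lemma kstar_subset_complete_edges: "is_kstar k V S \<Longrightarrow> S \<subseteq> complete_edges V"
  unfolding is_kstar_def complete_edges_def by blast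

lemma is_kstar_if_common_vertex:
  assumes "B \<subseteq> complete_edges V" "\<forall>e\<in>B. v \<in> e" "v \<in> V" "finite B" "card B = k"
  shows "is_kstar k V B"
proof -
  define L where "L = {y. {v, y} \<in> B}"
  have "B \<subseteq> (\<lambda>y. {v, y}) ` L"
  proof
    fix e assume "e \<in> B"
    then have "e \<in> complete_edges V" "v \<in> e" using assms(1,2) by blast+
    then obtain a b where "e = {a, b}" "v \<in> e" unfolding complete_edges_def by blast
    then have "e = {v, a} \<or> e = {v, b}" by auto
    then show "e \<in> (\<lambda>y. {v, y}) ` L" using \<open>e \<in> B\<close> unfolding L_def by auto
  qed
  then have B: "B = (\<lambda>y. {v, y}) ` L" unfolding L_def by blast
  have L: "L \<subseteq> V - {v}"
    using assms(1) unfolding L_def complete_edges_def by (auto simp: doubleton_eq_iff)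
  then have "inj_on (\<lambda>y. {v, y}) L" by (auto simp: inj_on_def doubleton_eq_iff)
  then have "finite L" "card L = k"
    using B assms(4,5) by (simp_all add: finite_image_iff card_image)
  then show ?thesis unfolding is_kstar_def using assms(3) B L by blast
qed

lemma kstar_decomposition_of_orientation:
  assumes "finite V" "E \<subseteq> complete_edges V" "orients_with_indegree V E (\<lambda>v. k * m v) h"
  shows "\<exists>P. \<Union>P = E \<and> disjoint P \<and> (\<forall>S\<in>P. is_kstar k V S)"
proof -
  define fibre where "fibre v = {e\<in>E. h e = v}" for v
  have "finite E" using assms(1,2) finite_complete_edges finite_subset by blast
  have "\<exists>P. \<Union>P = fibre v \<and> disjoint P \<and> (\<forall>B\<in>P. card B = k)" if "v \<in> V" for v
  proof (rule partition_into_blocks)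
    show "finite (fibre v)" using \<open>finite E\<close> unfolding fibre_def by simp
    show "card (fibre v) = k * m v"
      using assms(3) that unfolding orients_with_indegree_def fibre_def by blast
  qed
  then have "\<forall>v\<in>V. \<exists>P. \<Union>P = fibre v \<and> disjoint P \<and> (\<forall>B\<in>P. card B = k)" by blast
  then obtain blocks where "\<forall>v\<in>V. \<Union>(blocks v) = fibre v \<and> disjoint (blocks v) \<and> (\<forall>B\<in>blocks v. card B = k)"
    by (rule bchoice[THEN exE])
  then have blocks: "\<And>v. v \<in> V \<Longrightarrow> \<Union>(blocks v) = fibre v"
    "\<And>v. v \<in> V \<Longrightarrow> disjoint (blocks v)" "\<And>v B. v \<in> V \<Longrightarrow> B \<in> blocks v \<Longrightarrow> card B = k"
    by blast+
  have "h e \<in> V" if "e \<in> E" for e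
    using assms(2,3) that unfolding orients_with_indegree_def complete_edges_card_2 by blast
  then have "(\<Union>v\<in>V. fibre v) = E" unfolding fibre_def by blast
  moreover have "\<Union>(\<Union>v\<in>V. blocks v) = (\<Union>v\<in>V. \<Union>(blocks v))" by blast
  ultimately have "\<Union>(\<Union>v\<in>V. blocks v) = E" using blocks(1) by simp
  moreover have "disjoint_family_on fibre V"
    unfolding disjoint_family_on_def fibre_def by auto
  then have "disjoint (\<Union>v\<in>V. blocks v)"
    using blocks(1,2) by (intro disjoint_UN) (simp_all add: disjoint_family_on_def)
  moreover have "is_kstar k V B" if "v \<in> V" "B \<in> blocks v" for v B
  proof (rule is_kstar_if_common_vertex)
    have "B \<subseteq> fibre v" using blocks(1) that by blast
    then show "B \<subseteq> complete_edges V" "\<forall>e\<in>B. v \<in> e" "finite B"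
      using assms(2,3) \<open>finite E\<close> unfolding fibre_def orients_with_indegree_def
      by (auto intro: finite_subset)
  qed (use blocks(3) that in auto)
  ultimately show ?thesis by blast
qed

lemma completable_if_orientation:
  assumes "finite V" "partial_kstar_design k V A"
    and "orients_with_indegree V (complete_edges V - \<Union>A) (\<lambda>v. k * m v) h"
  shows "completable k V A"
proof -
  obtain P where P: "\<Union>P = complete_edges V - \<Union>A" "disjoint P" "\<forall>S\<in>P. is_kstar k V S"
    using kstar_decomposition_of_orientation[OF assms(1) _ assms(3)] by blast
  have "\<Union>A \<subseteq> complete_edges V"
    using assms(2) kstar_subset_complete_edges unfolding partial_kstar_design_def by blast
  then have "\<Union>(A \<union> P) = complete_edges V" using P(1) by blast
  moreover have "partial_kstar_design k V (A \<union> P)"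
    using assms(2) P unfolding partial_kstar_design_def by (auto intro: disjoint_union)
  ultimately show ?thesis unfolding completable_def by blast
qed

section \<open>Completing three edge-disjoint stars\<close>

locale three_stars =
  fixes k n :: nat and V :: "'a set" and A :: "'a set set set"
    and centre :: "'a set set \<Rightarrow> 'a" and leaves :: "'a set set \<Rightarrow> 'a set"
  assumes k_ge_3: "3 \<le> k" and n_admissible: "admissible k n"
    and n_gt: "2*k + 1 < n" and n_le: "n \<le> 3*k"
    and finite_V: "finite V" and card_V: "card V = n"
    and disjoint_A: "disjoint A" and card_A: "card A = 3"
    and centre_in_V: "\<And>\<sigma>. \<sigma> \<in> A \<Longrightarrow> centre \<sigma> \<in> V"
    and leaves_subset: "\<And>\<sigma>. \<sigma> \<in> A \<Longrightarrow> leaves \<sigma> \<subseteq> V - {centre \<sigma>}"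
    and card_leaves: "\<And>\<sigma>. \<sigma> \<in> A \<Longrightarrow> card (leaves \<sigma>) = k"
    and star_eq: "\<And>\<sigma>. \<sigma> \<in> A \<Longrightarrow> \<sigma> = (\<lambda>x. {centre \<sigma>, x}) ` leaves \<sigma>"
begin

lemma finite_A: "finite A"
  using card_A by (simp add: card_ge_0_finite)

lemma finite_leaves: "\<sigma> \<in> A \<Longrightarrow> finite (leaves \<sigma>)"
  using card_leaves k_ge_3 by (simp add: card_ge_0_finite)

lemma star_edge_iff:
  assumes "\<sigma> \<in> A"
  shows "{centre \<sigma>, x} \<in> \<sigma> \<longleftrightarrow> x \<in> leaves \<sigma>"
proof -
  have "{centre \<sigma>, x} = {centre \<sigma>, y} \<longleftrightarrow> x = y" if "y \<in> leaves \<sigma>" for y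
    using that leaves_subset[OF assms] by (auto simp: doubleton_eq_iff)
  then show ?thesis by (subst star_eq[OF assms]) auto
qed

lemma card_star: "\<sigma> \<in> A \<Longrightarrow> card \<sigma> = k"
proof -
  assume "\<sigma> \<in> A"
  have "inj_on (\<lambda>x. {centre \<sigma>, x}) (leaves \<sigma>)"
    using leaves_subset[OF \<open>\<sigma> \<in> A\<close>] by (auto simp: inj_on_def doubleton_eq_iff)
  then show ?thesis using star_eq[OF \<open>\<sigma> \<in> A\<close>] card_leaves[OF \<open>\<sigma> \<in> A\<close>] by (metis card_image)
qed

lemma finite_star: "\<sigma> \<in> A \<Longrightarrow> finite \<sigma>"
  using card_star k_ge_3 by (simp add: card_ge_0_finite)

lemma star_subset_complete_edges:
  assumes "\<sigma> \<in> A"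
  shows "\<sigma> \<subseteq> complete_edges V"
proof -
  have "{centre \<sigma>, x} \<in> complete_edges V" if "x \<in> leaves \<sigma>" for x
    using that centre_in_V[OF assms] leaves_subset[OF assms] unfolding complete_edges_def by blast
  then show ?thesis by (subst star_eq[OF assms]) blast
qed

lemma same_centre_common_leaf:
  assumes "\<sigma> \<in> A" "\<tau> \<in> A" "centre \<sigma> = centre \<tau>" "x \<in> leaves \<sigma>" "x \<in> leaves \<tau>"
  shows "\<sigma> = \<tau>"
proof (rule ccontr)
  assume "\<sigma> \<noteq> \<tau>"
  then have "disjnt \<sigma> \<tau>" using disjoint_A assms(1,2) by (simp add: pairwiseD)
  moreover have "{centre \<sigma>, x} \<in> \<sigma> \<inter> \<tau>"
    using assms star_edge_iff[of \<sigma> x] star_edge_iff[of \<tau> x] by simp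
  ultimately show False unfolding disjnt_def by blast
qed

definition centre_mult :: "'a \<Rightarrow> nat" where
  "centre_mult v = card {\<sigma>\<in>A. centre \<sigma> = v}"

lemma sum_centre_mult:
  assumes "finite T"
  shows "(\<Sum>v\<in>T. centre_mult v) = card {\<sigma>\<in>A. centre \<sigma> \<in> T}"
proof -
  have "(\<Sum>v\<in>T. centre_mult v) = (\<Sum>v\<in>T. card {\<sigma>\<in>{\<sigma>\<in>A. centre \<sigma> \<in> T}. centre \<sigma> = v})"
    unfolding centre_mult_def by (intro sum.cong refl arg_cong[where f = card]) auto
  also have "\<dots> = card {\<sigma>\<in>A. centre \<sigma> \<in> T}"
    using finite_A assms by (intro sum_card_fibres) auto
  finally show ?thesis .
qed

lemma centre_mult_pos: "0 < centre_mult v \<Longrightarrow> v \<in> centre ` A"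
  unfolding centre_mult_def by (auto simp: card_gt_0_iff)

lemma centre_mult_le_2: "centre_mult v \<le> 2"
proof (rule ccontr)
  assume "\<not> centre_mult v \<le> 2"
  then have "card {\<sigma>\<in>A. centre \<sigma> = v} = card A"
    using card_A card_mono[OF finite_A, of "{\<sigma>\<in>A. centre \<sigma> = v}"] unfolding centre_mult_def by auto
  then have centre_v: "centre \<sigma> = v" if "\<sigma> \<in> A" for \<sigma>
    using card_subset_eq[OF finite_A, of "{\<sigma>\<in>A. centre \<sigma> = v}"] that by auto
  obtain \<sigma>0 where "\<sigma>0 \<in> A" using card_A by fastforce
  then have "v \<in> V" using centre_v centre_in_V by blast
  have "(\<Union>\<sigma>\<in>A. leaves \<sigma>) \<subseteq> V - {v}" using leaves_subset centre_v by blast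
  then have "card (\<Union>\<sigma>\<in>A. leaves \<sigma>) \<le> n - 1"
    using card_mono[of "V - {v}"] finite_V card_V \<open>v \<in> V\<close> by fastforce
  moreover have "card (\<Union>\<sigma>\<in>A. leaves \<sigma>) = (\<Sum>\<sigma>\<in>A. card (leaves \<sigma>))"
    using finite_A finite_leaves same_centre_common_leaf centre_v
    by (intro card_UN_disjoint) fastforce+
  then have "card (\<Union>\<sigma>\<in>A. leaves \<sigma>) = 3 * k" using card_leaves card_A by simp
  ultimately show False using n_le n_gt by simp
qed

lemma card_double_centres: "card {v\<in>V. centre_mult v = 2} \<le> 1"
proof -
  have "2 * card {v\<in>V. centre_mult v = 2} = (\<Sum>v\<in>{v\<in>V. centre_mult v = 2}. centre_mult v)" by simp
  also have "\<dots> \<le> (\<Sum>v\<in>V. centre_mult v)" using finite_V by (intro sum_mono2) auto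
  also have "\<dots> = card {\<sigma>\<in>A. centre \<sigma> \<in> V}" by (rule sum_centre_mult[OF finite_V])
  also have "\<dots> = 3" using centre_in_V card_A by (simp add: Collect_conj_eq Int_absorb2 subsetI)
  finally show ?thesis by simp
qed

definition common_leaves :: "'a set" where
  "common_leaves = (\<Inter>\<sigma>\<in>A. leaves \<sigma>)"

lemma card_common_leaves: "card common_leaves \<le> k"
proof -
  obtain \<sigma> where "\<sigma> \<in> A" using card_A by fastforce
  then have "common_leaves \<subseteq> leaves \<sigma>" unfolding common_leaves_def by blast
  then show ?thesis using card_mono finite_leaves card_leaves \<open>\<sigma> \<in> A\<close> by metis
qed

lemma common_leaves_subset: "common_leaves \<subseteq> V"
proof -
  obtain \<sigma> where "\<sigma> \<in> A" using card_A by fastforce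
  then show ?thesis using leaves_subset unfolding common_leaves_def by blast
qed

lemma centres_not_common_leaves: "centre ` A \<inter> common_leaves = {}"
  using leaves_subset unfolding common_leaves_def by blast

text \<open>
  A completion has \<open>(n choose 2) div k\<close> stars; if every vertex is the centre of one or two
  of them, exactly \<open>num_doubles\<close> vertices are centres of two.
\<close>
definition num_doubles :: nat where
  "num_doubles = (n choose 2) div k - n"

lemma num_doubles: "k * (n + num_doubles) = n choose 2" "3 \<le> num_doubles" "num_doubles + k \<le> n"
proof -
  have k_N: "k * ((n choose 2) div k) = n choose 2"
    using n_admissible mult_div_mod_eq[of k "n choose 2"] unfolding admissible_def by simp
  have "2*k + 3 \<le> n" using admissible_above_double_cases[OF k_ge_3 n_admissible n_gt] by auto
  from num_stars_bounds[OF k_ge_3 k_N this n_le] show "k * (n + num_doubles) = n choose 2" "3 \<le> num_doubles" "num_doubles + k \<le> n"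
    using k_N unfolding num_doubles_def by simp_all
qed

lemma exists_double_centres:
  "\<exists>D. centre ` A \<subseteq> D \<and> D \<subseteq> V \<and> D \<inter> common_leaves = {} \<and> card D = num_doubles"
proof -
  let ?C = "centre ` A"
  have card_C: "card ?C \<le> 3" using card_image_le[OF finite_A, of centre] card_A by simp
  have "card (?C \<union> common_leaves) \<le> card ?C + k"
    using card_Un_le[of ?C common_leaves] card_common_leaves by simp
  moreover have "finite (?C \<union> common_leaves)"
    using common_leaves_subset centre_in_V finite_V by (blast intro: finite_subset)
  then have "card V - card (?C \<union> common_leaves) \<le> card (V - (?C \<union> common_leaves))"
    by (rule diff_card_le_card_Diff)
  ultimately have "num_doubles - card ?C \<le> card (V - (?C \<union> common_leaves))"
    using card_V num_doubles(3) by linarith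
  then obtain X where X: "X \<subseteq> V - (?C \<union> common_leaves)" "card X = num_doubles - card ?C"
    by (meson obtain_subset_with_card_n)
  have "card (?C \<union> X) = num_doubles"
    using X card_C num_doubles(2) finite_A finite_subset[OF X(1)] finite_V
    by (subst card_Un_disjoint) auto
  moreover have "?C \<union> X \<subseteq> V" using X(1) centre_in_V by blast
  moreover have "(?C \<union> X) \<inter> common_leaves = {}" using X(1) centres_not_common_leaves by blast
  ultimately show ?thesis by blast
qed

definition entering :: "'a set \<Rightarrow> nat" where
  "entering T = (\<Sum>\<sigma>\<in>{\<sigma>\<in>A. centre \<sigma> \<notin> T}. card (leaves \<sigma> \<inter> T))"

lemma card_star_edges_meeting:
  assumes "\<sigma> \<in> A"
  shows "card {e\<in>\<sigma>. e \<inter> T \<noteq> {}} \<le> (if centre \<sigma> \<in> T then k else card (leaves \<sigma> \<inter> T))"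
proof (cases "centre \<sigma> \<in> T")
  case True
  have "card {e\<in>\<sigma>. e \<inter> T \<noteq> {}} \<le> card \<sigma>" using finite_star[OF assms] by (intro card_mono) auto
  then show ?thesis using True card_star[OF assms] by simp
next
  case False
  have "e \<in> (\<lambda>x. {centre \<sigma>, x}) ` (leaves \<sigma> \<inter> T)" if "e \<in> \<sigma>" "e \<inter> T \<noteq> {}" for e
  proof -
    have "e \<in> (\<lambda>x. {centre \<sigma>, x}) ` leaves \<sigma>" using that(1) star_eq[OF assms] by simp
    then obtain x where "x \<in> leaves \<sigma>" "e = {centre \<sigma>, x}" by blast
    then show ?thesis using that(2) False by auto
  qed
  then have "card {e\<in>\<sigma>. e \<inter> T \<noteq> {}} \<le> card ((\<lambda>x. {centre \<sigma>, x}) ` (leaves \<sigma> \<inter> T))"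
    using finite_leaves[OF assms] by (intro card_mono) auto
  also have "\<dots> \<le> card (leaves \<sigma> \<inter> T)" by (rule card_image_le) (simp add: finite_leaves[OF assms])
  finally show ?thesis using False by simp
qed

lemma card_old_edges_meeting:
  "card {e\<in>\<Union>A. e \<inter> T \<noteq> {}} \<le> k * card {\<sigma>\<in>A. centre \<sigma> \<in> T} + entering T"
proof -
  have "{e\<in>\<Union>A. e \<inter> T \<noteq> {}} = (\<Union>\<sigma>\<in>A. {e\<in>\<sigma>. e \<inter> T \<noteq> {}})" by blast
  then have "card {e\<in>\<Union>A. e \<inter> T \<noteq> {}} \<le> (\<Sum>\<sigma>\<in>A. card {e\<in>\<sigma>. e \<inter> T \<noteq> {}})"
    using card_UN_le[OF finite_A] by simp
  also have "\<dots> \<le> (\<Sum>\<sigma>\<in>A. if centre \<sigma> \<in> T then k else card (leaves \<sigma> \<inter> T))"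
    by (intro sum_mono card_star_edges_meeting)
  also have "\<dots> = k * card {\<sigma>\<in>A. centre \<sigma> \<in> T} + entering T"
    using finite_A unfolding entering_def by (simp add: sum.If_cases Int_def)
  finally show ?thesis .
qed

lemma entering_eq_sum_over_leaves:
  assumes "finite T"
  shows "entering T = (\<Sum>v\<in>T. card {\<sigma>\<in>A. centre \<sigma> \<notin> T \<and> v \<in> leaves \<sigma>})"
proof -
  have "entering T = (\<Sum>\<sigma>\<in>{\<sigma>\<in>A. centre \<sigma> \<notin> T}. card {v\<in>T. v \<in> leaves \<sigma>})"
    unfolding entering_def by (intro sum.cong) (auto intro: arg_cong[where f = card])
  also have "\<dots> = (\<Sum>v\<in>T. card {\<sigma>\<in>{\<sigma>\<in>A. centre \<sigma> \<notin> T}. v \<in> leaves \<sigma>})"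
    using finite_A assms by (intro sum_card_swap) auto
  finally show ?thesis by (simp add: conj_assoc)
qed

end

text \<open>
  \<open>D\<close> is the set of vertices that will be centres of two stars. Avoiding the common leaves
  makes every vertex of \<open>D\<close> a leaf of at most two of the given stars.
\<close>
locale three_stars_with_doubles = three_stars +
  fixes D :: "'a set"
  assumes centres_subset_D: "centre ` A \<subseteq> D" and D_subset_V: "D \<subseteq> V"
    and D_common_leaves: "D \<inter> common_leaves = {}" and card_D: "card D = num_doubles"
begin

lemma centre_mult_outside_D: "v \<notin> D \<Longrightarrow> centre_mult v = 0"
  using centre_mult_pos centres_subset_D by blast

definition new_stars :: "'a \<Rightarrow> nat" where
  "new_stars v = (if v \<in> D then 2 else 1) - centre_mult v"

lemma new_stars_add_centre_mult: "new_stars v + centre_mult v = (if v \<in> D then 2 else 1)"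
proof (cases "v \<in> D")
  case True
  then show ?thesis using centre_mult_le_2[of v] unfolding new_stars_def by simp
next
  case False
  then show ?thesis using centre_mult_outside_D unfolding new_stars_def by simp
qed

lemma sum_new_stars:
  assumes "finite S"
  shows "(\<Sum>v\<in>S. new_stars v) + card {\<sigma>\<in>A. centre \<sigma> \<in> S} = 2 * card (S \<inter> D) + card (S - D)"
proof -
  have "(\<Sum>v\<in>S. new_stars v) + card {\<sigma>\<in>A. centre \<sigma> \<in> S} = (\<Sum>v\<in>S. new_stars v + centre_mult v)"
    using sum_centre_mult[OF assms] by (simp add: sum.distrib)
  also have "\<dots> = (\<Sum>v\<in>S. if v \<in> D then 2 else 1)" by (simp only: new_stars_add_centre_mult)
  also have "\<dots> = 2 * card (S \<inter> D) + card (S - D)"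
    using assms by (simp add: sum.If_cases Diff_eq Int_def)
  finally show ?thesis .
qed

definition free_edges :: "'a set set" where
  "free_edges = complete_edges V - \<Union>A"

lemma finite_free_edges: "finite free_edges"
  unfolding free_edges_def using finite_complete_edges[OF finite_V] by simp

lemma card_free_edges: "card free_edges = (n choose 2) - 3 * k"
proof -
  have "\<Union>A \<subseteq> complete_edges V" using star_subset_complete_edges by blast
  moreover have "card (\<Union>A) = 3 * k"
    using card_Union_disjoint[OF disjoint_A] finite_star card_star card_A by simp
  ultimately show ?thesis
    unfolding free_edges_def using finite_complete_edges[OF finite_V]
    by (simp add: card_Diff_subset finite_subset card_complete_edges[OF finite_V] card_V)
qed

lemma sum_demand: "(\<Sum>v\<in>V. k * new_stars v) = card free_edges"
proof -
  have "{\<sigma>\<in>A. centre \<sigma> \<in> V} = A" using centre_in_V by blast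
  then have "(\<Sum>v\<in>V. new_stars v) + 3 = 2 * num_doubles + (n - num_doubles)"
    using sum_new_stars[OF finite_V] card_A D_subset_V card_D card_V finite_V
    by (simp add: Int_absorb1 card_Diff_subset finite_subset)
  then have "(\<Sum>v\<in>V. new_stars v) = n + num_doubles - 3" using num_doubles(3) by simp
  then show ?thesis
    using num_doubles(1,2) card_free_edges by (simp add: sum_distrib_left[symmetric] diff_mult_distrib2)
qed

lemma card_new_stars_zero: "card {v\<in>V. new_stars v = 0} \<le> 1"
proof -
  have "centre_mult v = 2" if "new_stars v = 0" for v
    using new_stars_add_centre_mult[of v] centre_mult_outside_D[of v] that by (simp split: if_splits)
  then have "{v\<in>V. new_stars v = 0} \<subseteq> {v\<in>V. centre_mult v = 2}" by blast
  then have "card {v\<in>V. new_stars v = 0} \<le> card {v\<in>V. centre_mult v = 2}"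
    using finite_V by (intro card_mono) auto
  then show ?thesis using card_double_centres by simp
qed

lemma demand_condition_small:
  assumes "S \<subseteq> V" "card S \<le> 2 * k"
  shows "card {e\<in>free_edges. e \<subseteq> S} \<le> (\<Sum>v\<in>S. k * new_stars v)"
proof -
  have fin: "finite S" using assms(1) finite_V finite_subset by blast
  have "{e\<in>free_edges. e \<subseteq> S} \<subseteq> complete_edges S"
    unfolding free_edges_def complete_edges_card_2 by blast
  then have "card {e\<in>free_edges. e \<subseteq> S} \<le> card S choose 2"
    using card_mono[OF finite_complete_edges[OF fin]] unfolding card_complete_edges[OF fin] by blast
  also have "\<dots> \<le> k * (card S - 1)"
  proof -
    have "card S * (card S - 1) \<le> 2 * k * (card S - 1)" using assms(2) by (rule mult_le_mono1)
    then have "2 * (card S choose 2) \<le> 2 * (k * (card S - 1))"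
      unfolding double_choose_two by (simp add: mult.assoc)
    then show ?thesis by simp
  qed
  also have "card S - 1 \<le> (\<Sum>v\<in>S. new_stars v)"
  proof -
    let ?Z = "{v\<in>V. new_stars v = 0}"
    have "card S - 1 \<le> card (S - ?Z)"
      using diff_card_le_card_Diff[of ?Z S] card_new_stars_zero finite_V by simp
    also have "\<dots> = (\<Sum>v\<in>S - ?Z. 1)" by simp
    also have "\<dots> \<le> (\<Sum>v\<in>S - ?Z. new_stars v)"
      using assms(1) by (intro sum_mono) auto
    also have "\<dots> \<le> (\<Sum>v\<in>S. new_stars v)" using fin by (intro sum_mono2) auto
    finally show ?thesis .
  qed
  finally show ?thesis by (simp add: sum_distrib_left)
qed

lemma card_stars_with_leaf: "card {\<sigma>\<in>A. v \<in> leaves \<sigma>} \<le> (if v \<in> D then 2 else 3)"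
proof (cases "v \<in> D")
  case True
  then obtain \<sigma>0 where "\<sigma>0 \<in> A" "v \<notin> leaves \<sigma>0"
    using D_common_leaves unfolding common_leaves_def by blast
  then have "card {\<sigma>\<in>A. v \<in> leaves \<sigma>} \<le> card (A - {\<sigma>0})"
    using finite_A by (intro card_mono) auto
  then show ?thesis using True card_A \<open>\<sigma>0 \<in> A\<close> finite_A by simp
next
  case False
  then show ?thesis using card_mono[OF finite_A, of "{\<sigma>\<in>A. v \<in> leaves \<sigma>}"] card_A by auto
qed

lemma entering_le_leaf_bound:
  assumes "finite T"
  shows "entering T \<le> 2 * card (T \<inter> D) + 3 * card (T - D)"
proof -
  have "entering T \<le> (\<Sum>v\<in>T. card {\<sigma>\<in>A. v \<in> leaves \<sigma>})"
    unfolding entering_eq_sum_over_leaves[OF assms] using finite_A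
    by (intro sum_mono card_mono) auto
  also have "\<dots> \<le> (\<Sum>v\<in>T. if v \<in> D then 2 else 3)"
    by (intro sum_mono card_stars_with_leaf)
  also have "\<dots> = 2 * card (T \<inter> D) + 3 * card (T - D)"
    using assms by (simp add: sum.If_cases Diff_eq Int_def)
  finally show ?thesis .
qed

lemma entering_le_doubles_bound:
  assumes "T \<subseteq> V"
  shows "entering T \<le> card T * (num_doubles - card (T \<inter> D))"
proof -
  have fin: "finite T" using assms finite_V finite_subset by blast
  have "card {\<sigma>\<in>A. centre \<sigma> \<notin> T \<and> v \<in> leaves \<sigma>} \<le> card (D - T)" for v
  proof -
    let ?S = "{\<sigma>\<in>A. centre \<sigma> \<notin> T \<and> v \<in> leaves \<sigma>}"
    have "inj_on centre ?S"
      by (rule inj_onI) (simp add: same_centre_common_leaf[where x = v])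
    then have "card ?S = card (centre ` ?S)" by (simp add: card_image)
    also have "\<dots> \<le> card (D - T)"
      using centres_subset_D finite_subset[OF D_subset_V finite_V] by (intro card_mono) auto
    finally show ?thesis .
  qed
  then have "entering T \<le> (\<Sum>v\<in>T. card (D - T))"
    unfolding entering_eq_sum_over_leaves[OF fin] by (intro sum_mono)
  also have "card (D - T) = num_doubles - card (T \<inter> D)"
    using card_D finite_subset[OF D_subset_V finite_V] by (simp add: card_Diff_subset_Int Int_commute)
  finally show ?thesis by simp
qed

lemma cut_inequality:
  assumes "T \<subseteq> V" "card T + 2*k + 1 \<le> n"
  shows "k * (2 * card (T \<inter> D) + card (T - D)) + entering T + ((n - card T) choose 2) \<le> n choose 2"
proof -
  have fin: "finite T" using assms(1) finite_V finite_subset by blast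
  define a b where "a = card (T \<inter> D)" and "b = card (T - D)"
  have T: "card T = a + b" unfolding a_def b_def using card_Int_Diff[OF fin] .
  have leaf_bound: "entering T \<le> 2*a + 3*b" using entering_le_leaf_bound[OF fin] unfolding a_def b_def .
  consider "2*k + 4 \<le> n" | "k = 3" "n = 9"
    using admissible_above_double_cases[OF k_ge_3 n_admissible n_gt] by blast
  then show ?thesis
  proof cases
    case 1
    then show ?thesis using star_cut_inequality[OF k_ge_3 1 _ leaf_bound] assms(2) T
      unfolding a_def b_def by simp
  next
    case 2
    \<comment> \<open>here the leaf bound is too weak; the entering edges at a vertex have distinct centres in \<open>D - T\<close>\<close>
    then have "num_doubles = 3" using num_doubles(1) by (simp add: choose_two)
    then have "entering T \<le> (a + b) * (3 - a)"
      using entering_le_doubles_bound[OF assms(1)] T unfolding a_def by simp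
    then show ?thesis using star_cut_inequality_nine[OF _ leaf_bound] assms(2) T 2
      unfolding a_def b_def by simp
  qed
qed

lemma demand_le_free_edges_meeting:
  assumes "T \<subseteq> V" "card T + 2*k + 1 \<le> n"
  shows "(\<Sum>v\<in>T. k * new_stars v) \<le> card {e\<in>free_edges. e \<inter> T \<noteq> {}}"
proof -
  have fin: "finite T" using assms(1) finite_V finite_subset by blast
  let ?M = "{e\<in>complete_edges V. e \<inter> T \<noteq> {}}" and ?O = "{e\<in>\<Union>A. e \<inter> T \<noteq> {}}"
  have "finite ?O" using finite_A finite_star by auto
  moreover have "{e\<in>free_edges. e \<inter> T \<noteq> {}} = ?M - ?O" unfolding free_edges_def by blast
  ultimately have "card ?M - card ?O \<le> card {e\<in>free_edges. e \<inter> T \<noteq> {}}"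
    using diff_card_le_card_Diff[of ?O ?M] by simp
  moreover have "card ?M + ((n - card T) choose 2) = n choose 2"
    using card_complete_edges_meeting[OF finite_V assms(1)] card_V by simp
  moreover have "(\<Sum>v\<in>T. k * new_stars v) + k * card {\<sigma>\<in>A. centre \<sigma> \<in> T}
      = k * (2 * card (T \<inter> D) + card (T - D))"
    using arg_cong[OF sum_new_stars[OF fin], of "(*) k"] by (simp add: sum_distrib_left distrib_left)
  ultimately show ?thesis
    using card_old_edges_meeting[of T] cut_inequality[OF assms] by linarith
qed

lemma demand_condition: "\<forall>S\<subseteq>V. card {e\<in>free_edges. e \<subseteq> S} \<le> (\<Sum>v\<in>S. k * new_stars v)"
proof (intro allI impI)
  fix S assume "S \<subseteq> V"
  show "card {e\<in>free_edges. e \<subseteq> S} \<le> (\<Sum>v\<in>S. k * new_stars v)"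
  proof (cases "card S \<le> 2 * k")
    case True
    then show ?thesis using demand_condition_small[OF \<open>S \<subseteq> V\<close>] by simp
  next
    case False
    define T where "T = V - S"
    have "card T = n - card S" "card S \<le> n"
      using \<open>S \<subseteq> V\<close> finite_V card_V card_mono unfolding T_def by (auto simp: card_Diff_subset finite_subset)
    then have "T \<subseteq> V" "card T + 2*k + 1 \<le> n" using False unfolding T_def by auto
    note large = demand_le_free_edges_meeting[OF this]
    have "{e\<in>free_edges. e \<subseteq> S} = free_edges - {e\<in>free_edges. e \<inter> T \<noteq> {}}"
      unfolding T_def free_edges_def complete_edges_card_2 by blast
    then have "card {e\<in>free_edges. e \<subseteq> S} = card free_edges - card {e\<in>free_edges. e \<inter> T \<noteq> {}}"
      using finite_free_edges by (simp add: card_Diff_subset)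
    moreover have "(\<Sum>v\<in>V. k * new_stars v) = (\<Sum>v\<in>S. k * new_stars v) + (\<Sum>v\<in>T. k * new_stars v)"
      using sum.subset_diff[OF \<open>S \<subseteq> V\<close> finite_V] unfolding T_def by (simp add: add.commute)
    ultimately show ?thesis using sum_demand large by linarith
  qed
qed

end

theorem lemma10:
  fixes k n :: nat and V :: "'a set" and A :: "'a set set set"
  assumes "k \<ge> 3" and "n > 0" and "admissible k n"
    and "2 * k + 1 < n" and "n \<le> 3 * k"
    and "finite V" and "card V = n"
    and "partial_kstar_design k V A" and "card A = 3"
  shows "completable k V A"
proof -
  have "\<forall>\<sigma>\<in>A. \<exists>c L. c \<in> V \<and> L \<subseteq> V - {c} \<and> card L = k \<and> \<sigma> = (\<lambda>x. {c, x}) ` L"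
    using assms(8) unfolding partial_kstar_design_def is_kstar_def by blast
  then obtain centre where "\<forall>\<sigma>\<in>A. \<exists>L. centre \<sigma> \<in> V \<and> L \<subseteq> V - {centre \<sigma>} \<and> card L = k
      \<and> \<sigma> = (\<lambda>x. {centre \<sigma>, x}) ` L"
    by (rule bchoice[THEN exE])
  then obtain leaves where "\<forall>\<sigma>\<in>A. centre \<sigma> \<in> V \<and> leaves \<sigma> \<subseteq> V - {centre \<sigma>} \<and> card (leaves \<sigma>) = k
      \<and> \<sigma> = (\<lambda>x. {centre \<sigma>, x}) ` leaves \<sigma>"
    by (rule bchoice[THEN exE])
  then interpret three_stars k n V A centre leaves
    using assms unfolding partial_kstar_design_def by unfold_locales auto
  obtain D where "centre ` A \<subseteq> D" "D \<subseteq> V" "D \<inter> common_leaves = {}" "card D = num_doubles"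
    using exists_double_centres by blast
  then interpret three_stars_with_doubles k n V A centre leaves D
    by unfold_locales
  have "free_edges \<subseteq> complete_edges V" unfolding free_edges_def by blast
  then obtain h where "orients_with_indegree V free_edges (\<lambda>v. k * new_stars v) h"
    using hakimi_orientation[OF finite_V _ sum_demand demand_condition] by blast
  then show ?thesis
    using completable_if_orientation[OF finite_V assms(8)] unfolding free_edges_def by blast
qed

end
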